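(* Let $V, K$ be positive integers, let $\boldsymbol\epsilon \in [0,1]^V$, and let $R$ be a finite set of rays with $|R| \ge K$, each ray $j\in R$ having a vector $\mathbf p_j=(p_{ij})_{i=1}^V \in [0,1]^V$. Run the greedy algorithm on $R$ for $K$ iterations: set $\mathbf b^0=\boldsymbol\epsilon$ and $A_0=R$; at iteration $t=1,\dots,K$ choose $j_t \in \arg\min_{j\in A_{t-1}} \sum_{i} b^{t-1}_i p_{ij}$ (ties broken arbitrarily), set $\mathbf b^t = \mathbf b^{t-1}\odot \mathbf p_{j_t}$ (coordinatewise product) and $A_t = A_{t-1}\setminus\{j_t\}$. Let $f^t=\sum_{i=1}^V b^t_i$, $E=\sum_{i=1}^V \epsilon_i$, and $$\mathrm{OPT} = \min_{S\subseteq R,\ |S|=K}\ \sum_{i=1}^V \prod_{j\in S} p_{ij}.$$ Then $$f^K \le \frac{E}{e} + \mathrm{OPT}\Big(1-\frac{1}{e}\Big),$$ where $e$ is Euler's number.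
   Context: Here $\epsilon_i$ models the expected reconstruction loss in voxel $i$ and $p_{ij}$ the probability that voxel $i$ is not covered by ray $j$; this is the single-position case ($L=1$) of the ray-planning problem. *)

theory Defs
  imports Complex_Main
begin

text \<open>Coverage-probability vector after t greedy picks: b^0 = eps, b^t = b^(t-1) (.) p_(j_t).
  Rays are of type 'r; p j i is the probability p_ij; voxels are indexed 1..V.\<close>
fun bvec :: "(nat \<Rightarrow> real) \<Rightarrow> ('r \<Rightarrow> nat \<Rightarrow> real) \<Rightarrow> (nat \<Rightarrow> 'r) \<Rightarrow> nat \<Rightarrow> nat \<Rightarrow> real" where
  "bvec eps p js 0 = eps"
| "bvec eps p js (Suc t) = (\<lambda>i. bvec eps p js t i * p (js (Suc t)) i)"

fun avail :: "'r set \<Rightarrow> (nat \<Rightarrow> 'r) \<Rightarrow> nat \<Rightarrow> 'r set" where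
  "avail R js 0 = R"
| "avail R js (Suc t) = avail R js t - {js (Suc t)}"

definition greedy_run :: "nat \<Rightarrow> nat \<Rightarrow> (nat \<Rightarrow> real) \<Rightarrow> 'r set \<Rightarrow> ('r \<Rightarrow> nat \<Rightarrow> real) \<Rightarrow> (nat \<Rightarrow> 'r) \<Rightarrow> bool" where
  "greedy_run V K eps R p js \<longleftrightarrow>
     (\<forall>t\<in>{1..K}. js t \<in> avail R js (t - 1) \<and>
        (\<forall>j\<in>avail R js (t - 1).
           (\<Sum>i=1..V. bvec eps p js (t - 1) i * p (js t) i) \<le> (\<Sum>i=1..V. bvec eps p js (t - 1) i * p j i)))"

definition OPT :: "nat \<Rightarrow> nat \<Rightarrow> 'r set \<Rightarrow> ('r \<Rightarrow> nat \<Rightarrow> real) \<Rightarrow> real" where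
  "OPT V K R p = Min ((\<lambda>S. \<Sum>i=1..V. \<Prod>j\<in>S. p j i) ` {S. S \<subseteq> R \<and> card S = K})"

end

theory Submission
  imports Defs
begin

text \<open>For every K-subset S of rays, the coverage of the rays of S still available after t greedy
  picks is subadditive, so one of them -- hence the greedy pick -- removes at least a 1/K fraction
  of the gap between the current loss and the loss of S. Thus the gap shrinks by a factor
  (1 - 1/K) per iteration, and (1 - 1/K)^K \<le> 1/e.\<close>

lemma one_minus_prod_le_sum_one_minus:
  fixes x :: "'a \<Rightarrow> real"
  assumes "finite S" and "\<And>j. j \<in> S \<Longrightarrow> 0 \<le> x j \<and> x j \<le> 1"
  shows "1 - (\<Prod>j\<in>S. x j) \<le> (\<Sum>j\<in>S. 1 - x j)"
  using assms
proof (induction S rule: finite_induct)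
  case empty
  then show ?case by simp
next
  case (insert a S)
  have "0 \<le> (\<Prod>j\<in>S. x j)" "(\<Prod>j\<in>S. x j) \<le> 1" "0 \<le> x a" "x a \<le> 1"
    using insert.prems by (auto intro: prod_nonneg prod_le_1)
  then have "1 - x a * (\<Prod>j\<in>S. x j) \<le> (1 - x a) + (1 - (\<Prod>j\<in>S. x j))"
    using mult_nonneg_nonneg[of "1 - x a" "1 - (\<Prod>j\<in>S. x j)"] by (simp add: algebra_simps)
  with insert show ?case by simp
qed

lemma sum_mult_one_minus_prod_le:
  fixes b :: "'i \<Rightarrow> real" and x :: "'a \<Rightarrow> 'i \<Rightarrow> real"
  assumes "finite S" and "\<And>i. i \<in> I \<Longrightarrow> 0 \<le> b i"
    and "\<And>j i. j \<in> S \<Longrightarrow> i \<in> I \<Longrightarrow> 0 \<le> x j i \<and> x j i \<le> 1"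
  shows "(\<Sum>i\<in>I. b i * (1 - (\<Prod>j\<in>S. x j i))) \<le> (\<Sum>j\<in>S. \<Sum>i\<in>I. b i * (1 - x j i))"
proof -
  have "(\<Sum>i\<in>I. b i * (1 - (\<Prod>j\<in>S. x j i))) \<le> (\<Sum>i\<in>I. b i * (\<Sum>j\<in>S. 1 - x j i))"
    using assms by (intro sum_mono mult_left_mono one_minus_prod_le_sum_one_minus) auto
  also have "\<dots> = (\<Sum>j\<in>S. \<Sum>i\<in>I. b i * (1 - x j i))"
    by (simp add: sum_distrib_left sum.swap[of _ S])
  finally show ?thesis .
qed

lemma prod_antimono_unit_interval:
  fixes x :: "'a \<Rightarrow> real"
  assumes "finite B" and "A \<subseteq> B" and "\<And>j. j \<in> B \<Longrightarrow> 0 \<le> x j \<and> x j \<le> 1"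
  shows "(\<Prod>j\<in>B. x j) \<le> (\<Prod>j\<in>A. x j)"
proof -
  have "(\<Prod>j\<in>B. x j) = (\<Prod>j\<in>B - A. x j) * (\<Prod>j\<in>A. x j)"
    using prod.subset_diff[OF assms(2,1)] by simp
  moreover have "(\<Prod>j\<in>B - A. x j) \<le> 1" "0 \<le> (\<Prod>j\<in>A. x j)"
    using assms by (auto intro!: prod_le_1 prod_nonneg)
  ultimately show ?thesis
    using mult_right_mono[of "(\<Prod>j\<in>B - A. x j)" 1] by simp
qed

lemma gap_contraction_exp_bound:
  fixes f :: "nat \<Rightarrow> real" and K :: nat
  assumes "K > 0"
    and contract: "\<And>t. t < K \<Longrightarrow> f (Suc t) - c \<le> (1 - 1 / K) * (f t - c)"
    and decreasing: "\<And>t. t < K \<Longrightarrow> f (Suc t) \<le> f t"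
  shows "f K \<le> f 0 / exp 1 + c * (1 - 1 / exp 1)"
proof -
  have gap: "f t - c \<le> (1 - 1 / K) ^ t * (f 0 - c)" if "t \<le> K" for t
    using that
  proof (induction t)
    case (Suc t)
    have "(1 - 1 / K) * (f t - c) \<le> (1 - 1 / K) * ((1 - 1 / K) ^ t * (f 0 - c))"
      using Suc \<open>K > 0\<close> by (intro mult_left_mono) auto
    with contract[of t] Suc.prems show ?case by simp
  qed simp
  have below_start: "f t \<le> f 0" if "t \<le> K" for t
    using that by (induction t) (auto intro: order_trans[OF decreasing])
  have "(1 - 1 / K) ^ K \<le> 1 / exp (1::real)"
    using exp_ge_one_minus_x_over_n_power_n[of 1 K] \<open>K > 0\<close> by (simp add: exp_minus inverse_eq_divide)
  show ?thesis
  proof (cases "c \<le> f 0")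
    case True
    with \<open>(1 - 1 / K) ^ K \<le> 1 / exp 1\<close> have "(1 - 1 / K) ^ K * (f 0 - c) \<le> (f 0 - c) / exp 1"
      using mult_right_mono[of "(1 - 1 / K) ^ K" "1 / exp 1" "f 0 - c"] by simp
    with gap[of K] show ?thesis by (simp add: algebra_simps diff_divide_distrib)
  next
    case False
    then have "f 0 * (1 - 1 / exp 1) \<le> c * (1 - 1 / exp 1)"
      by (intro mult_right_mono) auto
    then have "f 0 \<le> f 0 / exp 1 + c * (1 - 1 / exp 1)"
      by (simp add: algebra_simps)
    with below_start[of K] show ?thesis by simp
  qed
qed

lemma avail_eq: "avail R js t = R - js ` {1..t}"
  by (induction t) (auto simp: atLeastAtMostSuc_conv)

lemma bvec_eq_prod: "bvec eps p js t i = eps i * (\<Prod>s\<in>{1..t}. p (js s) i)"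
  by (induction t) (auto simp: atLeastAtMostSuc_conv)

lemma OPT_attained:
  assumes "finite R" and "K \<le> card R"
  obtains S where "S \<subseteq> R" "card S = K" "OPT V K R p = (\<Sum>i=1..V. \<Prod>j\<in>S. p j i)"
proof -
  have "finite {S. S \<subseteq> R \<and> card S = K}"
    by (rule finite_subset[of _ "Pow R"]) (use assms(1) in auto)
  moreover have "{S. S \<subseteq> R \<and> card S = K} \<noteq> {}"
    using obtain_subset_with_card_n[OF assms(2)] by blast
  ultimately have "OPT V K R p \<in> (\<lambda>S. \<Sum>i=1..V. \<Prod>j\<in>S. p j i) ` {S. S \<subseteq> R \<and> card S = K}"
    unfolding OPT_def by (intro Min_in) auto
  with that show ?thesis by blast
qed

locale greedy_instance =
  fixes V K :: nat and eps :: "nat \<Rightarrow> real" and R :: "'r set"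
    and p :: "'r \<Rightarrow> nat \<Rightarrow> real" and js :: "nat \<Rightarrow> 'r"
  assumes K_pos: "K > 0"
    and eps_unit: "\<And>i. i \<in> {1..V} \<Longrightarrow> 0 \<le> eps i \<and> eps i \<le> 1"
    and finite_R: "finite R"
    and p_unit: "\<And>j i. j \<in> R \<Longrightarrow> i \<in> {1..V} \<Longrightarrow> 0 \<le> p j i \<and> p j i \<le> 1"
    and greedy: "greedy_run V K eps R p js"
begin

definition loss :: "nat \<Rightarrow> real" where
  "loss t = (\<Sum>i=1..V. bvec eps p js t i)"

definition gain :: "nat \<Rightarrow> 'r \<Rightarrow> real" where
  "gain t j = (\<Sum>i=1..V. bvec eps p js t i * (1 - p j i))"

lemma greedy_step:
  assumes "t < K"
  shows "js (Suc t) \<in> avail R js t \<and>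
    (\<forall>j\<in>avail R js t. (\<Sum>i=1..V. bvec eps p js t i * p (js (Suc t)) i)
                          \<le> (\<Sum>i=1..V. bvec eps p js t i * p j i))"
  using bspec[OF greedy[unfolded greedy_run_def], of "Suc t"] assms by simp

lemma pick_in_R:
  assumes "s \<in> {1..K}"
  shows "js s \<in> R"
proof -
  have "Suc (s - 1) = s" "s - 1 < K"
    using assms by auto
  then show ?thesis
    using greedy_step[of "s - 1"] by (simp add: avail_eq)
qed

lemma gain_le_pick:
  assumes "t < K" and "j \<in> avail R js t"
  shows "gain t j \<le> gain t (js (Suc t))"
  using greedy_step[OF assms(1)] assms(2)
  by (simp add: gain_def right_diff_distrib sum_subtractf)

lemma loss_diff_Suc: "loss t - loss (Suc t) = gain t (js (Suc t))"
  by (simp add: loss_def gain_def right_diff_distrib sum_subtractf)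

lemma inj_on_picks: "inj_on js {1..K}"
proof (rule linorder_inj_onI')
  fix s t assume "s \<in> {1..K}" "t \<in> {1..K}" "s < t"
  then have "js t \<notin> js ` {1..t - 1}" "s \<in> {1..t - 1}"
    using greedy_step[of "t - 1"] avail_eq[of R js "t - 1"] by auto
  then show "js s \<noteq> js t" by (metis imageI)
qed

lemma bvec_nonneg:
  assumes "i \<in> {1..V}" and "t \<le> K"
  shows "0 \<le> bvec eps p js t i"
proof -
  have "0 \<le> p (js s) i" if "s \<in> {1..t}" for s
    using that assms p_unit pick_in_R[of s] by auto
  then show ?thesis
    using eps_unit[OF \<open>i \<in> {1..V}\<close>] unfolding bvec_eq_prod
    by (intro mult_nonneg_nonneg prod_nonneg) auto
qed

lemma gain_pick_nonneg: "t < K \<Longrightarrow> 0 \<le> gain t (js (Suc t))"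
  using bvec_nonneg p_unit pick_in_R[of "Suc t"] unfolding gain_def by (auto intro!: sum_nonneg)

text \<open>The weights b^t already carry the factors of all picked rays, so adding the not yet picked
  rays of S yields eps times a product over a superset of S.\<close>

lemma bvec_mult_prod_avail_le:
  assumes "S \<subseteq> R" and "t \<le> K" and "i \<in> {1..V}"
  shows "bvec eps p js t i * (\<Prod>j\<in>S \<inter> avail R js t. p j i) \<le> (\<Prod>j\<in>S. p j i)"
proof -
  define P where "P = js ` {1..t}"
  have "P \<subseteq> R"
    using pick_in_R \<open>t \<le> K\<close> by (auto simp: P_def)
  have "finite S" "finite P"
    using \<open>S \<subseteq> R\<close> finite_R finite_subset P_def by auto
  have "inj_on js {1..t}"
    using inj_on_picks by (rule inj_on_subset) (use \<open>t \<le> K\<close> in auto)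
  then have "bvec eps p js t i = eps i * (\<Prod>j\<in>P. p j i)"
    by (simp add: bvec_eq_prod P_def prod.reindex)
  moreover have "S \<inter> avail R js t = S - P"
    using \<open>S \<subseteq> R\<close> by (auto simp: avail_eq P_def)
  moreover have "(\<Prod>j\<in>P. p j i) * (\<Prod>j\<in>S - P. p j i) = (\<Prod>j\<in>P \<union> S. p j i)"
    using \<open>finite S\<close> \<open>finite P\<close> by (subst prod.union_disjoint[symmetric]) (auto intro: prod.cong)
  ultimately have "bvec eps p js t i * (\<Prod>j\<in>S \<inter> avail R js t. p j i) = eps i * (\<Prod>j\<in>P \<union> S. p j i)"
    by (simp add: mult.assoc)
  also have "\<dots> \<le> (\<Prod>j\<in>P \<union> S. p j i)"
    using \<open>P \<subseteq> R\<close> \<open>S \<subseteq> R\<close> p_unit eps_unit \<open>i \<in> {1..V}\<close>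
    by (intro mult_left_le_one_le prod_nonneg) auto
  also have "\<dots> \<le> (\<Prod>j\<in>S. p j i)"
    using \<open>P \<subseteq> R\<close> \<open>S \<subseteq> R\<close> finite_R p_unit \<open>i \<in> {1..V}\<close>
    by (intro prod_antimono_unit_interval) (auto intro: finite_subset)
  finally show ?thesis .
qed

lemma loss_gap_contracts:
  assumes "S \<subseteq> R" and "card S \<le> K" and "t < K"
  defines "c \<equiv> \<Sum>i=1..V. \<Prod>j\<in>S. p j i"
  shows "loss (Suc t) - c \<le> (1 - 1 / K) * (loss t - c)"
proof -
  define S' where "S' = S \<inter> avail R js t"
  have "finite S'" "S' \<subseteq> R" "card S' \<le> K"
    using assms finite_R by (auto simp: S'_def intro: finite_subset le_trans[OF card_mono])
  have "loss t - c \<le> loss t - (\<Sum>i=1..V. bvec eps p js t i * (\<Prod>j\<in>S'. p j i))"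
    unfolding c_def S'_def using assms bvec_mult_prod_avail_le by (auto intro!: sum_mono)
  also have "\<dots> = (\<Sum>i=1..V. bvec eps p js t i * (1 - (\<Prod>j\<in>S'. p j i)))"
    by (simp add: loss_def right_diff_distrib sum_subtractf)
  also have "\<dots> \<le> (\<Sum>j\<in>S'. gain t j)"
    unfolding gain_def using \<open>finite S'\<close> \<open>S' \<subseteq> R\<close> bvec_nonneg p_unit \<open>t < K\<close>
    by (intro sum_mult_one_minus_prod_le) auto
  also have "\<dots> \<le> card S' * gain t (js (Suc t))"
    using gain_le_pick[OF \<open>t < K\<close>] sum_bounded_above[of S' "gain t"] by (auto simp: S'_def)
  also have "\<dots> \<le> K * gain t (js (Suc t))"
    using \<open>card S' \<le> K\<close> gain_pick_nonneg[OF \<open>t < K\<close>] by (intro mult_right_mono) auto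
  finally have "loss t - c \<le> K * (loss t - loss (Suc t))"
    by (simp add: loss_diff_Suc)
  then show ?thesis
    using K_pos by (simp add: field_simps)
qed

lemma loss_final_bound:
  assumes "K \<le> card R"
  shows "loss K \<le> loss 0 / exp 1 + OPT V K R p * (1 - 1 / exp 1)"
proof -
  obtain S where "S \<subseteq> R" "card S = K" and opt: "OPT V K R p = (\<Sum>i=1..V. \<Prod>j\<in>S. p j i)"
    using OPT_attained[OF finite_R assms] .
  show ?thesis
    unfolding opt
  proof (rule gap_contraction_exp_bound[OF K_pos])
    show "loss (Suc t) - (\<Sum>i=1..V. \<Prod>j\<in>S. p j i)
          \<le> (1 - 1 / K) * (loss t - (\<Sum>i=1..V. \<Prod>j\<in>S. p j i))" if "t < K" for t
      using loss_gap_contracts \<open>S \<subseteq> R\<close> \<open>card S = K\<close> that by simp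
    show "loss (Suc t) \<le> loss t" if "t < K" for t
      using loss_diff_Suc[of t] gain_pick_nonneg[OF that] by simp
  qed
qed

end

theorem theorem1:
  fixes V K :: nat and eps :: "nat \<Rightarrow> real" and R :: "'r set"
    and p :: "'r \<Rightarrow> nat \<Rightarrow> real" and js :: "nat \<Rightarrow> 'r"
  assumes "V > 0" and "K > 0"
    and "\<forall>i\<in>{1..V}. 0 \<le> eps i \<and> eps i \<le> 1"
    and "finite R" and "card R \<ge> K"
    and "\<forall>j\<in>R. \<forall>i\<in>{1..V}. 0 \<le> p j i \<and> p j i \<le> 1"
    and "greedy_run V K eps R p js"
  shows "(\<Sum>i=1..V. bvec eps p js K i)
           \<le> (\<Sum>i=1..V. eps i) / exp 1 + OPT V K R p * (1 - 1 / exp 1)"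
proof -
  interpret greedy_instance V K eps R p js
    using assms by unfold_locales auto
  show ?thesis
    using loss_final_bound[OF \<open>card R \<ge> K\<close>] by (simp add: loss_def)
qed

end
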